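(* Let $\mathsf{Sup}$ be the Hilbert system described in the context. For every instance, within the flat fragment of the language of Åqvist's system $\mathbb{F}$, of the axioms $\mathbf{CL}$, $\mathbf{K_\Box}$, $\mathbf{T}$, $\mathbf{COK}$, $\mathbf{Nec}$, $\mathbf{Ext}$, $\mathbf{ID}$, $\mathbf{SH}$, $\mathbf{D^*}$ of $\mathbb{F}$, its translation $^*$ is derivable in $\mathsf{Sup}$; moreover the translations of the rules of $\mathbb{F}$ are derivable in $\mathsf{Sup}$: modus ponens, and necessitation for $\Box$, i.e. if $\varphi$ is propositional and $\vdash\varphi$ then $\vdash \neg\varphi\rightsquigarrow\bot$. (The axioms $\mathbf{5}$ and $\mathbf{Abs}$ of $\mathbb{F}$ are excluded.)
   Context: Propositional formulas: $\varphi ::= \bot \mid p \mid \varphi\land\varphi\mid\varphi\lor\varphi\mid\varphi\to\varphi\mid\varphi\leftrightarrow\varphi\mid\neg\varphi$ over a countable set of variables. The language $\mathcal{L}$: $\alpha ::= \varphi \mid \varphi\rightsquigarrow\varphi \mid B(\alpha)\mid \alpha*\alpha\mid\neg\alpha$ ($*$ a binary classical connective, $\varphi$ propositional). The system $\mathsf{Sup}$ has all classical tautologies over $\mathcal{L}$, Modus Ponens, and (with $\varphi,\psi,\chi,\varphi_i,\psi_i$ propositional, rule outputs required to lie in $\mathcal{L}$): $\mathbf{ID}$: $\varphi\rightsquigarrow\varphi$; $\mathbf{ST}$: $(\varphi\rightsquigarrow\bot)\to\neg\varphi$; $\mathbf{SH}$: $((\psi\land\chi)\rightsquigarrow\varphi)\to(\psi\rightsquigarrow(\chi\to\varphi))$;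 $\mathbf{LL+}$: $(\neg(\varphi\leftrightarrow\psi)\rightsquigarrow\bot)\to((\varphi\rightsquigarrow\chi)\leftrightarrow(\psi\rightsquigarrow\chi))$; rule $\mathbf{RCK}$: from $(\varphi_1\land\dots\land\varphi_n)\to\varphi_{n+1}$ infer $((\psi\rightsquigarrow\varphi_1)\land\dots\land(\psi\rightsquigarrow\varphi_n))\to(\psi\rightsquigarrow\varphi_{n+1})$; rule $\mathbf{S5_F}$: from $(\ell_1\land\dots\land\ell_n)\to\chi$ infer $(\ell_1\land\dots\land\ell_n)\to(\neg\chi\rightsquigarrow\bot)$, where each $\ell_j$ is $\varphi_j\rightsquigarrow\psi_j$ or $\neg(\varphi_j\rightsquigarrow\psi_j)$ and $\chi$ is propositional. Åqvist's system $\mathbb{F}$ has language with $\Box$, $\lozenge$ and dyadic $\bigcirc(\psi/\varphi)$ and axioms: $\mathbf{CL}$ (tautologies); $\mathbf{K_\Box}$: $\Box(\varphi\to\psi)\to(\Box\varphi\to\Box\psi)$; $\mathbf{T}$: $\Box\varphi\to\varphi$; $\mathbf{5}$: $\lozenge\varphi\to\Box\lozenge\varphi$; $\mathbf{COK}$: $\bigcirc(\psi\to\chi/\varphi)\to(\bigcirc(\psi/\varphi)\to\bigcirc(\chi/\varphi))$; $\mathbf{Abs}$: $\bigcirc(\varphi/\psi)\to\Box\bigcirc(\varphi/\psi)$; $\mathbf{Nec}$: $\Box\varphi\to\bigcirc(\varphi/\psi)$; $\mathbf{Ext}$: $\Box(\varphi\leftrightarrow\psi)\to(\bigcirc(\chi/\varphi)\leftrightarrow\bigcirc(\chi/\psi))$;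 $\mathbf{ID}$: $\bigcirc(\varphi/\varphi)$; $\mathbf{SH}$: $\bigcirc(\varphi/\psi\land\chi)\to\bigcirc(\chi\to\varphi/\psi)$; $\mathbf{D^*}$: $\lozenge\psi\to(\bigcirc(\varphi/\psi)\to\neg\bigcirc(\neg\varphi/\psi))$; rules: modus ponens and necessitation for $\Box$. The flat fragment consists of formulas in which $\Box,\lozenge,\bigcirc$ are applied only to propositional formulas. The translation $^*$ maps flat formulas to $\mathcal{L}$: $\varphi^*=\varphi$ for propositional $\varphi$, $(\Box\varphi)^*=\neg\varphi\rightsquigarrow\bot$, $(\lozenge\varphi)^*=\neg(\varphi\rightsquigarrow\bot)$, $(\bigcirc(\psi/\varphi))^*=\varphi\rightsquigarrow\psi$, and $^*$ commutes with the Boolean connectives. *)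

theory Defs
  imports Main
begin

datatype pform = PBot | PVar nat | PAnd pform pform | POr pform pform
  | PImp pform pform | PIff pform pform | PNeg pform

text \<open>Propositional formulas are part of L; we represent them via their atoms
(bottom and variables) plus the shared Boolean connectives, so that a propositional
formula is literally an L-formula via lemb.\<close>

datatype lform = LBot | LVar nat | LCond pform pform | LB lform
  | LAnd lform lform | LOr lform lform | LImp lform lform | LIff lform lform
  | LNeg lform

primrec lemb :: "pform \<Rightarrow> lform" where
  "lemb PBot = LBot"
| "lemb (PVar n) = LVar n"
| "lemb (PAnd a b) = LAnd (lemb a) (lemb b)"
| "lemb (POr a b) = LOr (lemb a) (lemb b)"
| "lemb (PImp a b) = LImp (lemb a) (lemb b)"
| "lemb (PIff a b) = LIff (lemb a) (lemb b)"
| "lemb (PNeg a) = LNeg (lemb a)"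

text \<open>Classical evaluation: atoms are variables, conditionals and B-formulas.\<close>
primrec leval :: "(nat \<Rightarrow> bool) \<Rightarrow> (pform \<Rightarrow> pform \<Rightarrow> bool) \<Rightarrow> (lform \<Rightarrow> bool) \<Rightarrow> lform \<Rightarrow> bool" where
  "leval v c b LBot = False"
| "leval v c b (LVar n) = v n"
| "leval v c b (LCond p q) = c p q"
| "leval v c b (LB a) = b a"
| "leval v c b (LAnd x y) = (leval v c b x \<and> leval v c b y)"
| "leval v c b (LOr x y) = (leval v c b x \<or> leval v c b y)"
| "leval v c b (LImp x y) = (leval v c b x \<longrightarrow> leval v c b y)"
| "leval v c b (LIff x y) = (leval v c b x \<longleftrightarrow> leval v c b y)"
| "leval v c b (LNeg x) = (\<not> leval v c b x)"

definition ltaut :: "lform \<Rightarrow> bool" where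
  "ltaut a \<longleftrightarrow> (\<forall>v c b. leval v c b a)"

text \<open>Conjunctions of nonempty lists (n \<ge> 1 conjuncts).\<close>
fun pconj :: "pform list \<Rightarrow> pform" where
  "pconj [] = PNeg PBot"
| "pconj [x] = x"
| "pconj (x # y # xs) = PAnd x (pconj (y # xs))"

fun lconj :: "lform list \<Rightarrow> lform" where
  "lconj [] = LNeg LBot"
| "lconj [x] = x"
| "lconj (x # y # xs) = LAnd x (lconj (y # xs))"

text \<open>Conditional literals: (True, p, q) is p \<leadsto> q, (False, p, q) is its negation.\<close>
fun clit :: "bool \<times> pform \<times> pform \<Rightarrow> lform" where
  "clit (True, p, q) = LCond p q"
| "clit (False, p, q) = LNeg (LCond p q)"

inductive SupD :: "lform \<Rightarrow> bool" where
  CL: "ltaut a \<Longrightarrow> SupD a"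
| MP: "SupD (LImp a b) \<Longrightarrow> SupD a \<Longrightarrow> SupD b"
| ID: "SupD (LCond p p)"
| ST: "SupD (LImp (LCond p PBot) (LNeg (lemb p)))"
| SH: "SupD (LImp (LCond (PAnd q r) p) (LCond q (PImp r p)))"
| LLplus: "SupD (LImp (LCond (PNeg (PIff p q)) PBot) (LIff (LCond p r) (LCond q r)))"
| RCK: "ps \<noteq> [] \<Longrightarrow> SupD (lemb (PImp (pconj ps) p)) \<Longrightarrow>
        SupD (LImp (lconj (map (\<lambda>x. LCond q x) ps)) (LCond q p))"
| S5F: "ls \<noteq> [] \<Longrightarrow> SupD (LImp (lconj (map clit ls)) (lemb r)) \<Longrightarrow>
        SupD (LImp (lconj (map clit ls)) (LCond (PNeg r) PBot))"

text \<open>FObl p q stands for the dyadic obligation O(p / q).\<close>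
datatype fform = FBot | FVar nat | FBox pform | FDia pform | FObl pform pform
  | FAnd fform fform | FOr fform fform | FImp fform fform | FIff fform fform
  | FNeg fform

primrec femb :: "pform \<Rightarrow> fform" where
  "femb PBot = FBot"
| "femb (PVar n) = FVar n"
| "femb (PAnd a b) = FAnd (femb a) (femb b)"
| "femb (POr a b) = FOr (femb a) (femb b)"
| "femb (PImp a b) = FImp (femb a) (femb b)"
| "femb (PIff a b) = FIff (femb a) (femb b)"
| "femb (PNeg a) = FNeg (femb a)"

primrec feval :: "(nat \<Rightarrow> bool) \<Rightarrow> (pform \<Rightarrow> bool) \<Rightarrow> (pform \<Rightarrow> bool)
    \<Rightarrow> (pform \<Rightarrow> pform \<Rightarrow> bool) \<Rightarrow> fform \<Rightarrow> bool" where
  "feval v bx dm ob FBot = False"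
| "feval v bx dm ob (FVar n) = v n"
| "feval v bx dm ob (FBox p) = bx p"
| "feval v bx dm ob (FDia p) = dm p"
| "feval v bx dm ob (FObl p q) = ob p q"
| "feval v bx dm ob (FAnd x y) = (feval v bx dm ob x \<and> feval v bx dm ob y)"
| "feval v bx dm ob (FOr x y) = (feval v bx dm ob x \<or> feval v bx dm ob y)"
| "feval v bx dm ob (FImp x y) = (feval v bx dm ob x \<longrightarrow> feval v bx dm ob y)"
| "feval v bx dm ob (FIff x y) = (feval v bx dm ob x \<longleftrightarrow> feval v bx dm ob y)"
| "feval v bx dm ob (FNeg x) = (\<not> feval v bx dm ob x)"

definition ftaut :: "fform \<Rightarrow> bool" where
  "ftaut a \<longleftrightarrow> (\<forall>v bx dm ob. feval v bx dm ob a)"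

inductive F_ax :: "fform \<Rightarrow> bool" where
  CL: "ftaut a \<Longrightarrow> F_ax a"
| K: "F_ax (FImp (FBox (PImp p q)) (FImp (FBox p) (FBox q)))"
| T: "F_ax (FImp (FBox p) (femb p))"
| COK: "F_ax (FImp (FObl (PImp q r) p) (FImp (FObl q p) (FObl r p)))"
| Nec: "F_ax (FImp (FBox p) (FObl p q))"
| Ext: "F_ax (FImp (FBox (PIff p q)) (FIff (FObl r p) (FObl r q)))"
| ID: "F_ax (FObl p p)"
| SH: "F_ax (FImp (FObl p (PAnd q r)) (FObl (PImp r p) q))"
| Dstar: "F_ax (FImp (FDia q) (FImp (FObl p q) (FNeg (FObl (PNeg p) q))))"

primrec tr :: "fform \<Rightarrow> lform" where
  "tr FBot = LBot"
| "tr (FVar n) = LVar n"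
| "tr (FBox p) = LCond (PNeg p) PBot"
| "tr (FDia p) = LNeg (LCond p PBot)"
| "tr (FObl q p) = LCond p q"
| "tr (FAnd x y) = LAnd (tr x) (tr y)"
| "tr (FOr x y) = LOr (tr x) (tr y)"
| "tr (FImp x y) = LImp (tr x) (tr y)"
| "tr (FIff x y) = LIff (tr x) (tr y)"
| "tr (FNeg x) = LNeg (tr x)"

end

theory Submission
  imports Defs
begin

text \<open>The necessity \<open>\<box>\<phi>\<close> of F becomes \<open>\<not>\<phi> \<leadsto> \<bottom>\<close>. Then T is ST, while
necessitation, K and Nec follow from S5F, which concludes exactly such formulas from
conditional literals; COK and D* are single applications of RCK, and ID, SH and Ext are
the Sup axioms ID, SH and LL+.\<close>

abbreviation LBox :: "pform \<Rightarrow> lform" where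
  "LBox p \<equiv> LCond (PNeg p) PBot"

lemma SupD_taut_mp: "SupD a \<Longrightarrow> ltaut (LImp a c) \<Longrightarrow> SupD c"
  by (metis SupD.CL SupD.MP)

lemma SupD_taut_mp2: "SupD a \<Longrightarrow> SupD b \<Longrightarrow> ltaut (LImp a (LImp b c)) \<Longrightarrow> SupD c"
  by (metis SupD.CL SupD.MP)

lemma SupD_RCK1:
  assumes "SupD (lemb (PImp p r))"
  shows "SupD (LImp (LCond q p) (LCond q r))"
  using SupD.RCK[of "[p]" r q] assms by simp

lemma SupD_RCK2:
  assumes "SupD (lemb (PImp (PAnd p1 p2) r))"
  shows "SupD (LImp (LAnd (LCond q p1) (LCond q p2)) (LCond q r))"
  using SupD.RCK[of "[p1, p2]" r q] assms by simp

lemma SupD_S5F1: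
  assumes "SupD (LImp (clit l) (lemb r))"
  shows "SupD (LImp (clit l) (LBox r))"
  using SupD.S5F[of "[l]" r] assms by simp

lemma SupD_S5F2:
  assumes "SupD (LImp (LAnd (clit l1) (clit l2)) (lemb r))"
  shows "SupD (LImp (LAnd (clit l1) (clit l2)) (LBox r))"
  using SupD.S5F[of "[l1, l2]" r] assms by simp

lemma SupD_box_T: "SupD (LImp (LBox p) (lemb p))"
  by (rule SupD_taut_mp[OF SupD.ST[of "PNeg p"]]) (simp add: ltaut_def)

lemma SupD_box_nec:
  assumes "SupD (lemb p)"
  shows "SupD (LBox p)"
proof -
  have "SupD (LImp (LCond p p) (lemb p))"
    by (rule SupD_taut_mp[OF assms]) (simp add: ltaut_def)
  then have "SupD (LImp (LCond p p) (LBox p))"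
    using SupD_S5F1[of "(True, p, p)"] by simp
  then show ?thesis
    using SupD.MP SupD.ID by blast
qed

lemma SupD_box_mono:
  assumes "SupD (lemb (PImp p r))"
  shows "SupD (LImp (LBox p) (LBox r))"
proof -
  have "SupD (LImp (LBox p) (lemb r))"
    by (rule SupD_taut_mp2[OF SupD_box_T[of p] assms]) (simp add: ltaut_def)
  then show ?thesis
    using SupD_S5F1[of "(True, PNeg p, PBot)"] by simp
qed

lemma SupD_box_K: "SupD (LImp (LBox (PImp p q)) (LImp (LBox p) (LBox q)))"
proof -
  have "SupD (LImp (LAnd (LBox (PImp p q)) (LBox p)) (lemb q))"
    by (rule SupD_taut_mp2[OF SupD_box_T[of "PImp p q"] SupD_box_T[of p]])
      (auto simp: ltaut_def)
  then have "SupD (LImp (LAnd (LBox (PImp p q)) (LBox p)) (LBox q))"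
    using SupD_S5F2[of "(True, PNeg (PImp p q), PBot)" "(True, PNeg p, PBot)"] by simp
  then show ?thesis
    by (rule SupD_taut_mp) (auto simp: ltaut_def)
qed

text \<open>A necessary \<open>p\<close> makes \<open>q \<and> p\<close> and \<open>q\<close> necessarily equivalent, so by LL+ the
conditional \<open>q \<leadsto> p\<close> inherits the trivially derivable \<open>q \<and> p \<leadsto> p\<close>.\<close>

lemma SupD_box_imp_cond: "SupD (LImp (LBox p) (LCond q p))"
proof -
  have box_iff: "SupD (LImp (LBox p) (LBox (PIff (PAnd q p) q)))"
    by (rule SupD_box_mono, rule SupD.CL) (auto simp: ltaut_def)
  have "SupD (LImp (LCond (PAnd q p) (PAnd q p)) (LCond (PAnd q p) p))"
    by (rule SupD_RCK1, rule SupD.CL) (auto simp: ltaut_def)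
  then have conj_cond: "SupD (LCond (PAnd q p) p)"
    using SupD.MP SupD.ID by blast
  have "SupD (LImp (LBox p) (LIff (LCond (PAnd q p) p) (LCond q p)))"
    by (rule SupD_taut_mp2[OF box_iff SupD.LLplus[of "PAnd q p" q p]]) (auto simp: ltaut_def)
  then show ?thesis
    by (rule SupD_taut_mp2[OF _ conj_cond]) (auto simp: ltaut_def)
qed

lemma SupD_cond_K: "SupD (LImp (LCond p (PImp q r)) (LImp (LCond p q) (LCond p r)))"
proof -
  have "SupD (LImp (LAnd (LCond p (PImp q r)) (LCond p q)) (LCond p r))"
    by (rule SupD_RCK2, rule SupD.CL) (auto simp: ltaut_def)
  then show ?thesis
    by (rule SupD_taut_mp) (auto simp: ltaut_def)
qed

lemma SupD_cond_D: "SupD (LImp (LNeg (LCond q PBot)) (LImp (LCond q p) (LNeg (LCond q (PNeg p)))))"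
proof -
  have "SupD (LImp (LAnd (LCond q p) (LCond q (PNeg p))) (LCond q PBot))"
    by (rule SupD_RCK2, rule SupD.CL) (auto simp: ltaut_def)
  then show ?thesis
    by (rule SupD_taut_mp) (auto simp: ltaut_def)
qed

lemma tr_femb: "tr (femb p) = lemb p"
  by (induction p) auto

lemma leval_tr: "leval v c b (tr a) =
  feval v (\<lambda>p. c (PNeg p) PBot) (\<lambda>p. \<not> c p PBot) (\<lambda>q p. c p q) a"
  by (induction a) auto

lemma ltaut_tr: "ftaut a \<Longrightarrow> ltaut (tr a)"
  unfolding ftaut_def ltaut_def by (simp add: leval_tr)

lemma SupD_tr_F_ax:
  assumes "F_ax a"
  shows "SupD (tr a)"
  using assms
proof cases
  case CL
  then show ?thesis using ltaut_tr SupD.CL by blast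
qed (simp_all add: tr_femb SupD_box_K SupD_box_T SupD_cond_K SupD_box_imp_cond
    SupD.LLplus SupD.ID SupD.SH SupD_cond_D)

theorem theorem2:
  shows "(\<forall>a. F_ax a \<longrightarrow> SupD (tr a))
       \<and> (\<forall>a b. SupD (tr (FImp a b)) \<longrightarrow> SupD (tr a) \<longrightarrow> SupD (tr b))
       \<and> (\<forall>p. SupD (lemb p) \<longrightarrow> SupD (tr (FBox p)))"
  using SupD_tr_F_ax SupD.MP SupD_box_nec by simp

end
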